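(* Let $p\in(-1,\infty)$, $\xi\in\Xi^+$ and $\mathbf M=\mathbf M(\xi)$. Then every support point $\mathbf x_*$ of every $\phi_p$-optimal design satisfies $$\mathbf x_*^\top\mathbf M^{-(p+1)}\mathbf x_*\ge\lambda_{\min}(\mathbf M^{-p}).$$
   Context: Let $\mathcal X\subset\mathbb R^m$ be compact, $\Xi$ the set of probability measures on $\mathcal X$, $\mathbf M(\xi)=\int\mathbf x\mathbf x^\top\xi(d\mathbf x)$, and $\Xi^+$ the (nonempty) set of designs with nonsingular $\mathbf M(\xi)$. For $p\neq0$, $\Phi_p^+(\mathbf M)=[\tfrac1m\operatorname{tr}(\mathbf M^{-p})]^{-1/p}$ for positive definite $\mathbf M$. It is $0$ on singular matrices if $p>0$; for $p\in(-1,0)$ the formula applies to all nonnegative definite $\mathbf M$. Also $\Phi_0^+=(\det)^{1/m}$, and $\phi_p(\xi)=\Phi_p^+[\mathbf M(\xi)]$. A $\phi_p$-optimal design maximizes $\phi_p$ over $\Xi$. Matrix powers are defined spectrally, with $\mathbf M^0=\mathbf I_m$. *)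

theory Defs
  imports "HOL-Analysis.Analysis" "HOL-Probability.Probability"
begin

definition diag_mat :: "real^'m \<Rightarrow> real^'m^'m" where
  "diag_mat d = (\<chi> i j. if i = j then d $ i else 0)"

text \<open>Spectral matrix power of a symmetric matrix:
  if A = U diag(d) U^T with U orthogonal, then A^s = U diag(d_i^s) U^T
  (well defined, independent of the decomposition; only used for
  nonnegative definite A, with positive exponents when A is singular).\<close>
definition mpow :: "real^'m^'m \<Rightarrow> real \<Rightarrow> real^'m^'m" where
  "mpow A s = (SOME B. \<exists>U d. orthogonal_matrix U \<and>
      A = U ** diag_mat d ** transpose U \<and>
      B = U ** diag_mat (\<chi> i. (d $ i) powr s) ** transpose U)"

definition lambda_min :: "real^'m^'m \<Rightarrow> real" where
  "lambda_min A = Inf {c. \<exists>v. v \<noteq> 0 \<and> A *v v = c *\<^sub>R v}"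

definition is_design :: "(real^'m) set \<Rightarrow> (real^'m) measure \<Rightarrow> bool" where
  "is_design X \<xi> \<longleftrightarrow> sets \<xi> = sets borel \<and> prob_space \<xi> \<and> emeasure \<xi> X = 1"

definition info_mat :: "(real^'m) measure \<Rightarrow> real^'m^'m" where
  "info_mat \<xi> = (\<chi> i j. \<integral>x. (x $ i) * (x $ j) \<partial>\<xi>)"

definition Phi_plus :: "real \<Rightarrow> real^'m^'m \<Rightarrow> real" where
  "Phi_plus p M =
     (if p = 0 then det M powr (1 / real CARD('m))
      else if p > 0 \<and> \<not> invertible M then 0
      else ((1 / real CARD('m)) * trace (mpow M (- p))) powr (- 1 / p))"

definition phi :: "real \<Rightarrow> (real^'m) measure \<Rightarrow> real" where
  "phi p \<xi> = Phi_plus p (info_mat \<xi>)"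

definition phi_optimal :: "real \<Rightarrow> (real^'m) set \<Rightarrow> (real^'m) measure \<Rightarrow> bool" where
  "phi_optimal p X \<xi> \<longleftrightarrow> is_design X \<xi> \<and>
     (\<forall>\<zeta>. is_design X \<zeta> \<longrightarrow> phi p \<zeta> \<le> phi p \<xi>)"

definition support_point :: "(real^'m) measure \<Rightarrow> real^'m \<Rightarrow> bool" where
  "support_point \<xi> x \<longleftrightarrow> (\<forall>e>0. emeasure \<xi> (ball x e) > 0)"

end

theory Submission
  imports Defs
begin

(* Write M = M(xi) and let xs be a support point of a phi_p-optimal design xi_opt. If
   xs' M^-1 xs < 1, then by Cauchy-Schwarz, (u' x)^2 <= (x' M^-1 x) (u' M u), every x x' with x
   in a small ball around xs is dominated by r M for some r < 1. Moving the xi_opt-mass of that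
   ball onto xi thus increases M(xi_opt) in the Loewner order by a positive multiple of itself.
   For p >= -1 the criterion Phi_p^+ is Loewner monotone (Jensen's inequality for a doubly
   stochastic mixture of eigenvalues) and positively homogeneous, and
   Phi_p^+(M(xi_opt)) >= Phi_p^+(M) > 0, so the new design would beat xi_opt. Hence
   xs' M^-1 xs >= 1, and diagonalizing M gives
   xs' M^-(p+1) xs >= lambda_min(M^-p) xs' M^-1 xs >= lambda_min(M^-p). *)

section \<open>Orthogonally diagonalized matrices\<close>

definition orth_diag :: "real^'n^'n \<Rightarrow> real^'n \<Rightarrow> real^'n^'n" where
  "orth_diag U d = U ** diag_mat d ** transpose U"

lemma orth_diag_entry: "orth_diag U d $ i $ k = (\<Sum>j\<in>UNIV. U$i$j * d$j * U$k$j)"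
  unfolding orth_diag_def diag_mat_def
  by (simp add: matrix_matrix_mult_def transpose_def if_distrib sum.delta' cong: if_cong)

lemma orth_diag_mult_vec:
  "orth_diag U d *v y = (\<Sum>j\<in>UNIV. (d$j * (column j U \<bullet> y)) *\<^sub>R column j U)"
proof (subst vec_eq_iff, intro allI)
  fix i
  have "(orth_diag U d *v y) $ i = (\<Sum>k\<in>UNIV. \<Sum>j\<in>UNIV. U$i$j * d$j * U$k$j * y$k)"
    by (simp add: matrix_vector_mult_def orth_diag_entry sum_distrib_right)
  also have "\<dots> = (\<Sum>j\<in>UNIV. \<Sum>k\<in>UNIV. U$i$j * d$j * U$k$j * y$k)"
    by (rule sum.swap)
  also have "\<dots> = (\<Sum>j\<in>UNIV. (d$j * (column j U \<bullet> y)) *\<^sub>R column j U) $ i"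
    by (simp add: inner_vec_def column_def sum_distrib_left sum_distrib_right mult.commute mult.left_commute)
  finally show "(orth_diag U d *v y) $ i = (\<Sum>j\<in>UNIV. (d$j * (column j U \<bullet> y)) *\<^sub>R column j U) $ i" .
qed

lemma inner_orth_diag:
  "x \<bullet> (orth_diag U d *v y) = (\<Sum>j\<in>UNIV. d$j * (column j U \<bullet> x) * (column j U \<bullet> y))"
  by (simp add: orth_diag_mult_vec inner_sum_right inner_commute mult.commute mult.left_commute)

lemma scaleR_orth_diag: "c *\<^sub>R orth_diag U d = orth_diag U (c *\<^sub>R d)"
  by (simp add: vec_eq_iff orth_diag_entry sum_distrib_left mult.commute mult.left_commute)

lemma orth_diag_quadratic_mono:
  assumes "\<And>j. d$j \<le> e$j"
  shows "x \<bullet> (orth_diag U d *v x) \<le> x \<bullet> (orth_diag U e *v x)"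
  unfolding inner_orth_diag mult.assoc
  by (intro sum_mono mult_right_mono assms) (simp flip: power2_eq_square)

context
  fixes U :: "real^'n^'n"
  assumes U: "orthogonal_matrix U"
begin

lemma orthogonal_matrix_column_inner: "column i U \<bullet> column j U = (if i = j then 1 else 0)"
proof -
  have "(transpose U ** U) $ i $ j = mat 1 $ i $ j" using U by (simp add: orthogonal_matrix_def)
  then show ?thesis
    by (simp add: matrix_matrix_mult_def transpose_def inner_vec_def column_def mat_def)
qed

lemma orthogonal_matrix_column_nonzero: "column j U \<noteq> 0"
  using orthogonal_matrix_column_inner[of j j] by auto

lemma orth_diag_one: "orth_diag U (\<chi> i. 1) = mat 1"
proof -
  have "diag_mat (\<chi> i. 1) = (mat 1 :: real^'n^'n)" by (simp add: diag_mat_def mat_def vec_eq_iff)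
  then show ?thesis using U by (simp add: orth_diag_def orthogonal_matrix_def)
qed

lemma inner_eq_sum_columns: "x \<bullet> y = (\<Sum>j\<in>UNIV. (column j U \<bullet> x) * (column j U \<bullet> y))"
  using inner_orth_diag[of x U "\<chi> i. 1" y] by (simp add: orth_diag_one)

lemma vector_eq_sum_columns: "y = (\<Sum>j\<in>UNIV. (column j U \<bullet> y) *\<^sub>R column j U)"
  using orth_diag_mult_vec[of U "\<chi> i. 1" y] by (simp add: orth_diag_one)

lemma column_inner_orth_diag: "column l U \<bullet> (orth_diag U d *v y) = d$l * (column l U \<bullet> y)"
proof -
  have "column l U \<bullet> (orth_diag U d *v y) = (\<Sum>j\<in>UNIV. if j = l then d$l * (column l U \<bullet> y) else 0)"
    unfolding inner_orth_diag by (rule sum.cong) (auto simp: orthogonal_matrix_column_inner)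
  then show ?thesis by simp
qed

lemma orth_diag_column: "orth_diag U d *v column l U = d$l *\<^sub>R column l U"
proof -
  have "orth_diag U d *v column l U = (\<Sum>j\<in>UNIV. if j = l then d$l *\<^sub>R column l U else 0)"
    unfolding orth_diag_mult_vec by (rule sum.cong) (auto simp: orthogonal_matrix_column_inner)
  then show ?thesis by simp
qed

lemma orth_diag_eigenvalue_coeff:
  assumes "orth_diag U d *v v = c *\<^sub>R v"
  shows "column j U \<bullet> v = 0 \<or> d$j = c"
  using column_inner_orth_diag[of j d v] assms by auto

lemma orth_diag_eigenvalue_in_range:
  assumes "v \<noteq> 0" "orth_diag U d *v v = c *\<^sub>R v"
  shows "c \<in> range (\<lambda>j. d$j)"
proof -
  obtain j where "column j U \<bullet> v \<noteq> 0"
    using vector_eq_sum_columns[of v] assms(1) by force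
  then show ?thesis using orth_diag_eigenvalue_coeff[OF assms(2), of j] by auto
qed

lemma orth_diag_fun_eigenvector:
  assumes "orth_diag U d *v v = c *\<^sub>R v"
  shows "orth_diag U (\<chi> i. f (d$i)) *v v = f c *\<^sub>R v"
proof -
  have "orth_diag U (\<chi> i. f (d$i)) *v v = (\<Sum>j\<in>UNIV. (f c * (column j U \<bullet> v)) *\<^sub>R column j U)"
    unfolding orth_diag_mult_vec
    by (rule sum.cong) (use orth_diag_eigenvalue_coeff[OF assms] in auto)
  also have "\<dots> = f c *\<^sub>R v"
    by (subst (2) vector_eq_sum_columns) (simp add: scaleR_sum_right)
  finally show ?thesis .
qed

lemma matrix_eq_on_columns:
  assumes "\<And>j. B *v column j U = C *v column j U"
  shows "B = C"
proof -
  have "B ** U = C ** U"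
    using assms by (simp add: vec_eq_iff matrix_matrix_mult_def matrix_vector_mult_def column_def)
  then have "B ** U ** transpose U = C ** U ** transpose U" by simp
  then show ?thesis using U by (simp add: orthogonal_matrix_def flip: matrix_mul_assoc)
qed

lemma trace_orth_diag: "trace (orth_diag U d) = (\<Sum>j\<in>UNIV. d$j)"
proof -
  have "trace (orth_diag U d) = (\<Sum>i\<in>UNIV. \<Sum>j\<in>UNIV. U$i$j * d$j * U$i$j)"
    by (simp add: trace_def orth_diag_entry)
  also have "\<dots> = (\<Sum>j\<in>UNIV. \<Sum>i\<in>UNIV. U$i$j * d$j * U$i$j)" by (rule sum.swap)
  also have "\<dots> = (\<Sum>j\<in>UNIV. d$j * (column j U \<bullet> column j U))"
    by (simp add: inner_vec_def column_def sum_distrib_left mult.commute mult.left_commute)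
  finally have "trace (orth_diag U d) = (\<Sum>j\<in>UNIV. d$j * (column j U \<bullet> column j U))" .
  then show ?thesis by (simp add: orthogonal_matrix_column_inner)
qed

lemma det_orth_diag: "det (orth_diag U d) = (\<Prod>j\<in>UNIV. d$j)"
proof -
  have "det U * det U = 1" using det_orthogonal_matrix[OF U] by auto
  moreover have "det (diag_mat d) = (\<Prod>j\<in>UNIV. d$j)"
    by (subst det_diagonal) (auto simp: diag_mat_def)
  ultimately show ?thesis by (simp add: orth_diag_def det_mul)
qed

lemma invertible_orth_diag_iff: "invertible (orth_diag U d) \<longleftrightarrow> (\<forall>j. d$j \<noteq> 0)"
  by (simp add: invertible_det_nz det_orth_diag)

end

lemma orth_diag_fun_eq:
  fixes U V :: "real^'n^'n"
  assumes U: "orthogonal_matrix U" and V: "orthogonal_matrix V" and eq: "orth_diag U d = orth_diag V e"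
  shows "orth_diag U (\<chi> i. f (d$i)) = orth_diag V (\<chi> i. f (e$i))"
proof (rule matrix_eq_on_columns[OF V])
  fix j
  have "orth_diag U d *v column j V = e$j *\<^sub>R column j V"
    using eq orth_diag_column[OF V] by simp
  from orth_diag_fun_eigenvector[OF U this]
  show "orth_diag U (\<chi> i. f (d$i)) *v column j V = orth_diag V (\<chi> i. f (e$i)) *v column j V"
    by (simp add: orth_diag_column[OF V])
qed

context
  fixes U :: "real^'n^'n"
  assumes U: "orthogonal_matrix U"
begin

text \<open>The choice made in the definition of \<open>mpow\<close> is harmless: all orthogonal diagonalizations
  of a matrix yield the same power.\<close>
lemma mpow_orth_diag: "mpow (orth_diag U d) s = orth_diag U (\<chi> i. d$i powr s)"
proof -
  let ?P = "\<lambda>B. \<exists>V e. orthogonal_matrix V \<and> orth_diag U d = V ** diag_mat e ** transpose V \<and>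
      B = V ** diag_mat (\<chi> i. e$i powr s) ** transpose V"
  have "?P (orth_diag U (\<chi> i. d$i powr s))" using U unfolding orth_diag_def by blast
  then have "?P (mpow (orth_diag U d) s)" unfolding mpow_def by (rule someI)
  then obtain V e where "orthogonal_matrix V" "orth_diag U d = orth_diag V e"
      "mpow (orth_diag U d) s = orth_diag V (\<chi> i. e$i powr s)"
    unfolding orth_diag_def by blast
  then show ?thesis using orth_diag_fun_eq[OF U, of V d e "\<lambda>t. t powr s"] by simp
qed

lemma lambda_min_orth_diag: "lambda_min (orth_diag U d) = Min (range (\<lambda>j. d$j))"
proof -
  have "{c. \<exists>v. v \<noteq> 0 \<and> orth_diag U d *v v = c *\<^sub>R v} = range (\<lambda>j. d$j)"
  proof (intro antisym subsetI)
    fix c assume "c \<in> {c. \<exists>v. v \<noteq> 0 \<and> orth_diag U d *v v = c *\<^sub>R v}"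
    then obtain v where "v \<noteq> 0" "orth_diag U d *v v = c *\<^sub>R v" by blast
    then show "c \<in> range (\<lambda>j. d$j)" by (rule orth_diag_eigenvalue_in_range[OF U])
  next
    fix c assume "c \<in> range (\<lambda>j. d$j)"
    then obtain k where "c = d$k" by blast
    then show "c \<in> {c. \<exists>v. v \<noteq> 0 \<and> orth_diag U d *v v = c *\<^sub>R v}"
      by (intro CollectI exI[of _ "column k U"] conjI orthogonal_matrix_column_nonzero[OF U])
         (simp add: orth_diag_column[OF U])
  qed
  then show ?thesis unfolding lambda_min_def by (simp add: cInf_eq_Min)
qed

lemma orth_diag_quadratic_pos:
  assumes "\<And>j. d$j > 0" "x \<noteq> 0"
  shows "x \<bullet> (orth_diag U d *v x) > 0"
proof -
  obtain k where "column k U \<bullet> x \<noteq> 0"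
    using vector_eq_sum_columns[OF U, of x] assms(2) by force
  then have "0 < d$k * (column k U \<bullet> x)\<^sup>2" using assms(1)[of k] by simp
  moreover have "0 \<le> d$j * (column j U \<bullet> x)\<^sup>2" for j using assms(1)[of j] by simp
  ultimately show ?thesis unfolding inner_orth_diag mult.assoc power2_eq_square[symmetric]
    by (intro sum_pos2[of _ k]) auto
qed

lemma inner_square_le_orth_diag:
  assumes d: "\<And>j. d$j > 0"
  shows "(u \<bullet> x)\<^sup>2 \<le> (x \<bullet> (orth_diag U (\<chi> j. inverse (d$j)) *v x)) * (u \<bullet> (orth_diag U d *v u))"
proof -
  define b where "b j = column j U \<bullet> u" for j
  define c where "c j = column j U \<bullet> x" for j
  define \<alpha> :: "real^'n" where "\<alpha> = (\<chi> j. c j / sqrt (d$j))"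
  define \<beta> :: "real^'n" where "\<beta> = (\<chi> j. b j * sqrt (d$j))"
  have "u \<bullet> x = (\<Sum>j\<in>UNIV. b j * c j)" unfolding b_def c_def by (rule inner_eq_sum_columns[OF U])
  also have "\<dots> = \<alpha> \<bullet> \<beta>" unfolding \<alpha>_def \<beta>_def inner_vec_def
    by (intro sum.cong) (auto simp: d less_imp_neq[symmetric])
  finally have "u \<bullet> x = \<alpha> \<bullet> \<beta>" .
  moreover have "x \<bullet> (orth_diag U (\<chi> j. inverse (d$j)) *v x) = (\<Sum>j\<in>UNIV. c j * c j / d$j)"
    by (simp add: inner_orth_diag c_def field_simps)
  moreover have "\<dots> = \<alpha> \<bullet> \<alpha>" unfolding \<alpha>_def inner_vec_def
    by (intro sum.cong) (auto simp: d less_imp_le power2_eq_square)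
  moreover have "u \<bullet> (orth_diag U d *v u) = (\<Sum>j\<in>UNIV. d$j * b j * b j)"
    by (simp add: inner_orth_diag b_def)
  moreover have "\<dots> = \<beta> \<bullet> \<beta>" unfolding \<beta>_def inner_vec_def
    by (intro sum.cong) (auto simp: d less_imp_le power2_eq_square)
  ultimately show ?thesis by (simp add: Cauchy_Schwarz_ineq)
qed

end

section \<open>The spectral theorem for symmetric matrices\<close>

lemma symmetric_matrix_inner:
  fixes A :: "real^'n^'n"
  assumes "transpose A = A"
  shows "x \<bullet> (A *v y) = (A *v x) \<bullet> y"
  by (metis assms dot_lmul_matrix transpose_transpose vector_transpose_matrix)

lemma real_linear_le_quadratic_imp_zero:
  fixes g c :: real
  assumes "\<And>t. 2 * t * g \<le> t\<^sup>2 * c"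
  shows "g = 0"
proof (cases "c > 0")
  case True
  have "2 * (g / c) * g \<le> (g / c)\<^sup>2 * c" by (rule assms)
  then have "2 * (g * g) / c \<le> (g * g) / c" using True by (simp add: power2_eq_square field_simps)
  then show ?thesis using True by (auto simp: divide_le_cancel mult_le_0_iff)
next
  case False
  have "2 * g * g \<le> g\<^sup>2 * c" by (rule assms)
  moreover have "g\<^sup>2 * c \<le> 0" using False by (simp add: mult_nonneg_nonpos)
  ultimately have "g * g \<le> 0" by (simp add: power2_eq_square)
  then show ?thesis by (auto simp: mult_le_0_iff)
qed

text \<open>Otherwise moving \<open>v\<close> in the direction of the residual \<open>w\<close> would increase the Rayleigh
  quotient to first order.\<close>
lemma rayleigh_maximizer_eigenvector:
  fixes A :: "real^'n^'n"
  assumes sym: "transpose A = A" and V: "subspace V" and inv: "\<And>x. x \<in> V \<Longrightarrow> A *v x \<in> V"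
    and v: "v \<in> V" "v \<bullet> v = 1"
    and max: "\<And>y. y \<in> V \<Longrightarrow> y \<bullet> (A *v y) \<le> (v \<bullet> (A *v v)) * (y \<bullet> y)"
  shows "A *v v = (v \<bullet> (A *v v)) *\<^sub>R v"
proof -
  define lam where "lam = v \<bullet> (A *v v)"
  define w where "w = A *v v - lam *\<^sub>R v"
  have wV: "w \<in> V" unfolding w_def using V inv v by (simp add: subspace_diff subspace_scale)
  have wv: "w \<bullet> v = 0"
    unfolding w_def lam_def using v by (simp add: inner_diff_left inner_commute[of "A *v v" v])
  have vAw: "v \<bullet> (A *v w) = w \<bullet> w"
    using symmetric_matrix_inner[OF sym, of v w] wv
    by (simp add: w_def inner_diff_left inner_diff_right inner_commute)
  have "2 * t * (w \<bullet> w) \<le> t\<^sup>2 * (lam * (w \<bullet> w) - w \<bullet> (A *v w))" for t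
  proof -
    have le: "(v + t *\<^sub>R w) \<bullet> (A *v (v + t *\<^sub>R w)) \<le> lam * ((v + t *\<^sub>R w) \<bullet> (v + t *\<^sub>R w))"
      unfolding lam_def using V v wV by (intro max) (simp add: subspace_add subspace_scale)
    have e1: "(v + t *\<^sub>R w) \<bullet> (A *v (v + t *\<^sub>R w)) = lam + 2 * t * (w \<bullet> w) + t\<^sup>2 * (w \<bullet> (A *v w))"
      using vAw symmetric_matrix_inner[OF sym, of w v] inner_commute[of "A *v w" v]
      by (simp add: matrix_vector_right_distrib matrix_vector_mult_scaleR inner_add_left inner_add_right
          lam_def power2_eq_square algebra_simps)
    have e2: "(v + t *\<^sub>R w) \<bullet> (v + t *\<^sub>R w) = 1 + t\<^sup>2 * (w \<bullet> w)"
      using v wv by (simp add: inner_add_left inner_add_right inner_commute power2_eq_square)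
    from le show ?thesis unfolding e1 e2 by (simp add: algebra_simps)
  qed
  then have "w \<bullet> w = 0" by (rule real_linear_le_quadratic_imp_zero)
  then show ?thesis unfolding lam_def[symmetric] using w_def by simp
qed

lemma symmetric_matrix_eigenvector_in_subspace:
  fixes A :: "real^'n^'n"
  assumes sym: "transpose A = A" and V: "subspace V" and inv: "\<And>x. x \<in> V \<Longrightarrow> A *v x \<in> V"
    and x: "x \<in> V" "x \<noteq> 0"
  obtains v c where "v \<in> V" "norm v = 1" "A *v v = c *\<^sub>R v"
proof -
  define K where "K = sphere 0 1 \<inter> V"
  have "compact K" unfolding K_def by (intro compact_Int_closed compact_sphere closed_subspace V)
  moreover have "x /\<^sub>R norm x \<in> K" using x V unfolding K_def by (auto simp: subspace_scale)
  moreover have "continuous_on K (\<lambda>y. y \<bullet> (A *v y))"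
    by (intro continuous_intros linear_continuous_on matrix_vector_mul_bounded_linear)
  ultimately obtain v where vK: "v \<in> K" and vmax: "\<And>y. y \<in> K \<Longrightarrow> y \<bullet> (A *v y) \<le> v \<bullet> (A *v v)"
    using continuous_attains_sup[of K "\<lambda>y. y \<bullet> (A *v y)"] by blast
  have vV: "v \<in> V" and vv: "v \<bullet> v = 1" using vK unfolding K_def by (auto simp: dot_square_norm)
  have max: "y \<bullet> (A *v y) \<le> (v \<bullet> (A *v v)) * (y \<bullet> y)" if "y \<in> V" for y
  proof (cases "y = 0")
    case False
    have "y /\<^sub>R norm y \<in> K" using False that V unfolding K_def by (auto simp: subspace_scale)
    from vmax[OF this] have "(y \<bullet> (A *v y)) / (norm y)\<^sup>2 \<le> v \<bullet> (A *v v)"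
      by (simp add: matrix_vector_mult_scaleR power2_eq_square divide_inverse ac_simps)
    then show ?thesis using False by (simp add: dot_square_norm field_simps)
  qed simp
  have "A *v v = (v \<bullet> (A *v v)) *\<^sub>R v"
    using rayleigh_maximizer_eigenvector[OF sym V inv vV vv max] .
  then show thesis using that vV vv by (simp add: norm_eq_1)
qed

definition orthonormal_eigenvectors :: "real^'n^'n \<Rightarrow> (real^'n) set \<Rightarrow> bool" where
  "orthonormal_eigenvectors A B \<longleftrightarrow>
     pairwise orthogonal B \<and> (\<forall>b\<in>B. norm b = 1 \<and> (\<exists>c. A *v b = c *\<^sub>R b))"

lemma orthonormal_eigenvectors_card:
  fixes A :: "real^'n^'n"
  assumes "orthonormal_eigenvectors A B"
  shows "finite B" "card B \<le> CARD('n)"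
proof -
  have "independent B"
    using assms pairwise_orthogonal_independent unfolding orthonormal_eigenvectors_def by force
  then show "finite B" "card B \<le> CARD('n)" using independent_bound[of B] by auto
qed

lemma orthonormal_eigenvectors_extend:
  fixes A :: "real^'n^'n"
  assumes sym: "transpose A = A" and B: "orthonormal_eigenvectors A B" and card: "card B < CARD('n)"
  obtains v where "v \<notin> B" "orthonormal_eigenvectors A (insert v B)"
proof -
  define V where "V = {x. \<forall>b\<in>B. b \<bullet> x = 0}"
  have V: "subspace V" unfolding V_def subspace_def by (simp add: inner_add_right)
  have inv: "A *v y \<in> V" if "y \<in> V" for y
  proof -
    have "b \<bullet> (A *v y) = 0" if "b \<in> B" for b
    proof -
      obtain c where "A *v b = c *\<^sub>R b" using B \<open>b \<in> B\<close> unfolding orthonormal_eigenvectors_def by blast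
      then show ?thesis using symmetric_matrix_inner[OF sym, of b y] \<open>y \<in> V\<close> \<open>b \<in> B\<close>
        unfolding V_def by simp
    qed
    then show ?thesis unfolding V_def by simp
  qed
  have "dim B < DIM(real^'n)"
    using dim_le_card[OF span_superset orthonormal_eigenvectors_card(1)[OF B]] card by simp
  then obtain x where x: "x \<noteq> 0" "\<And>y. y \<in> span B \<Longrightarrow> orthogonal x y"
    using orthogonal_to_subspace_exists by blast
  have "x \<in> V" unfolding V_def using x(2) span_base by (force simp: orthogonal_def inner_commute)
  then obtain v c where v: "v \<in> V" "norm v = 1" "A *v v = c *\<^sub>R v"
    using symmetric_matrix_eigenvector_in_subspace[OF sym V inv _ x(1)] by blast
  show thesis
  proof
    show "v \<notin> B" using v unfolding V_def by (force simp: norm_eq_1)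
    show "orthonormal_eigenvectors A (insert v B)"
      using B v unfolding orthonormal_eigenvectors_def V_def
      by (auto simp: pairwise_insert orthogonal_def inner_commute)
  qed
qed

lemma orthonormal_eigenbasis_exists:
  fixes A :: "real^'n^'n"
  assumes sym: "transpose A = A"
  obtains B where "orthonormal_eigenvectors A B" "card B = CARD('n)"
proof -
  have "\<exists>B. orthonormal_eigenvectors A B \<and> card B = k" if "k \<le> CARD('n)" for k
    using that
  proof (induction k)
    case 0
    then show ?case by (intro exI[of _ "{}"]) (simp add: orthonormal_eigenvectors_def)
  next
    case (Suc k)
    then obtain B where B: "orthonormal_eigenvectors A B" "card B = k" by auto
    moreover have "card B < CARD('n)" using B(2) Suc.prems by simp
    ultimately obtain v where "v \<notin> B" "orthonormal_eigenvectors A (insert v B)"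
      using orthonormal_eigenvectors_extend[OF sym] by blast
    then show ?case using B orthonormal_eigenvectors_card(1)[OF B(1)] by auto
  qed
  then show thesis using that by blast
qed

theorem symmetric_matrix_orth_diag:
  fixes A :: "real^'n^'n"
  assumes sym: "transpose A = A"
  obtains U d where "orthogonal_matrix U" "A = orth_diag U d"
proof -
  obtain B where B: "orthonormal_eigenvectors A B" "card B = CARD('n)"
    using orthonormal_eigenbasis_exists[OF sym] .
  then obtain g where g: "bij_betw g (UNIV :: 'n set) B"
    using finite_same_card_bij[of "UNIV :: 'n set" B] orthonormal_eigenvectors_card(1)[OF B(1)] by auto
  define U :: "real^'n^'n" where "U = (\<chi> i j. g j $ i)"
  have col: "column j U = g j" for j unfolding U_def by (simp add: column_def vec_eq_iff)
  have gB: "g j \<in> B" for j using g by (auto simp: bij_betw_def)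
  have "g i \<noteq> g j" if "i \<noteq> j" for i j using g that by (auto simp: bij_betw_def inj_on_def)
  then have U: "orthogonal_matrix U"
    using B(1) gB unfolding orthogonal_matrix_orthonormal_columns col orthonormal_eigenvectors_def
    by (auto simp: pairwise_def)
  define d :: "real^'n" where "d = (\<chi> j. SOME c. A *v g j = c *\<^sub>R g j)"
  have "A *v column j U = d$j *\<^sub>R column j U" for j
  proof -
    have "\<exists>c. A *v g j = c *\<^sub>R g j" using B(1) gB unfolding orthonormal_eigenvectors_def by blast
    from someI_ex[OF this] show ?thesis unfolding d_def col by simp
  qed
  then have "A = orth_diag U d"
    by (intro matrix_eq_on_columns[OF U]) (simp add: orth_diag_column[OF U])
  with U show thesis by (rule that)
qed

section \<open>Loewner monotonicity of Kiefer's criterion\<close>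

lemma concave_on_powr:
  assumes q: "0 < q" "q \<le> 1"
  shows "concave_on {0..} (\<lambda>x::real. x powr q)"
proof (rule concave_on_linorderI)
  fix t x y :: real
  assume t: "0 < t" "t < 1" and xy: "x \<in> {0..}" "y \<in> {0..}" "x < y"
  show "(1 - t) * x powr q + t * y powr q \<le> ((1 - t) *\<^sub>R x + t *\<^sub>R y) powr q"
  proof (cases "x = 0")
    case True
    have "t \<le> t powr q" using powr_mono'[of q 1 t] q t by simp
    then have "t * y powr q \<le> t powr q * y powr q" by (simp add: mult_right_mono)
    then show ?thesis using True t xy by (simp add: powr_mult)
  next
    case False
    have "concave_on {0<..} (\<lambda>x::real. x powr q)"
    proof (rule f''_le0_imp_concave)
      fix x :: real assume "x \<in> {0<..}"
      then have x: "0 < x" by simp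
      show "((\<lambda>x. x powr q) has_real_derivative q * x powr (q - 1)) (at x)"
        by (rule has_real_derivative_powr[OF x])
      show "((\<lambda>x. q * x powr (q - 1)) has_real_derivative q * ((q - 1) * x powr (q - 1 - 1))) (at x)"
        by (rule DERIV_cmult, rule has_real_derivative_powr[OF x])
      show "q * ((q - 1) * x powr (q - 1 - 1)) \<le> 0"
        using q by (intro mult_nonneg_nonpos mult_nonpos_nonneg) auto
    qed simp
    then show ?thesis using False t xy by (intro concave_onD) auto
  qed
qed (simp add: convex_real_interval)

lemma convex_on_powr_neg:
  assumes "0 < p"
  shows "convex_on {0<..} (\<lambda>x::real. x powr (- p))"
proof (rule f''_ge0_imp_convex)
  fix x :: real assume "x \<in> {0<..}"
  then have x: "0 < x" by simp
  show "((\<lambda>x. x powr (- p)) has_real_derivative (- p) * x powr (- p - 1)) (at x)"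
    by (rule has_real_derivative_powr[OF x])
  show "((\<lambda>x. (- p) * x powr (- p - 1)) has_real_derivative (- p) * ((- p - 1) * x powr (- p - 1 - 1))) (at x)"
    by (rule DERIV_cmult, rule has_real_derivative_powr[OF x])
  have "0 \<le> (- p) * (- p - 1)" using assms by (intro mult_nonpos_nonpos) auto
  then show "0 \<le> (- p) * ((- p - 1) * x powr (- p - 1 - 1))"
    by (simp only: mult.assoc[symmetric]) (rule mult_nonneg_nonneg, simp_all)
qed simp

lemma sum_concave_le_doubly_stochastic:
  fixes P :: "'i::finite \<Rightarrow> 'i \<Rightarrow> real" and g :: "real \<Rightarrow> real"
  assumes P: "\<And>i j. 0 \<le> P i j" "\<And>i. (\<Sum>j\<in>UNIV. P i j) = 1" "\<And>j. (\<Sum>i\<in>UNIV. P i j) = 1"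
    and ab: "\<And>j. (\<Sum>i\<in>UNIV. P i j * a i) \<le> b j"
    and g: "concave_on I g" "mono_on I g" and a: "\<And>i. a i \<in> I" and b: "\<And>j. b j \<in> I"
  shows "(\<Sum>i\<in>UNIV. g (a i)) \<le> (\<Sum>j\<in>UNIV. g (b j))"
proof -
  have "(\<Sum>i\<in>UNIV. P i j * g (a i)) \<le> g (b j)" for j
  proof -
    have "(\<Sum>i\<in>UNIV. P i j *\<^sub>R a i) \<in> I"
      by (rule convex_sum[OF finite_class.finite_UNIV concave_on_imp_convex[OF g(1)] P(3) P(1) a])
    moreover have "(\<Sum>i\<in>UNIV. P i j * g (a i)) \<le> g (\<Sum>i\<in>UNIV. P i j *\<^sub>R a i)"
      by (rule concave_on_sum[OF finite_class.finite_UNIV UNIV_not_empty g(1) P(3) P(1) a])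
    ultimately show ?thesis using mono_onD[OF g(2) _ b] ab by fastforce
  qed
  then have "(\<Sum>j\<in>UNIV. \<Sum>i\<in>UNIV. P i j * g (a i)) \<le> (\<Sum>j\<in>UNIV. g (b j))" by (rule sum_mono)
  moreover have "(\<Sum>j\<in>UNIV. \<Sum>i\<in>UNIV. P i j * g (a i)) = (\<Sum>i\<in>UNIV. g (a i))"
    by (subst sum.swap) (simp add: P(2) flip: sum_distrib_right)
  ultimately show ?thesis by simp
qed

lemma loewner_le_orth_diag_mixing:
  fixes U V :: "real^'n^'n"
  assumes U: "orthogonal_matrix U" and V: "orthogonal_matrix V"
    and le: "\<And>x. x \<bullet> (orth_diag U a *v x) \<le> x \<bullet> (orth_diag V b *v x)"
  shows "(\<Sum>j\<in>UNIV. (column j V \<bullet> column i U)\<^sup>2) = 1"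
    and "(\<Sum>i\<in>UNIV. (column j V \<bullet> column i U)\<^sup>2) = 1"
    and "(\<Sum>i\<in>UNIV. (column j V \<bullet> column i U)\<^sup>2 * a$i) \<le> b$j"
proof -
  show "(\<Sum>j\<in>UNIV. (column j V \<bullet> column i U)\<^sup>2) = 1"
    using inner_eq_sum_columns[OF V, of "column i U" "column i U"]
    by (simp add: orthogonal_matrix_column_inner[OF U] power2_eq_square)
  show "(\<Sum>i\<in>UNIV. (column j V \<bullet> column i U)\<^sup>2) = 1"
    using inner_eq_sum_columns[OF U, of "column j V" "column j V"]
    by (simp add: orthogonal_matrix_column_inner[OF V] power2_eq_square inner_commute)
  have "(\<Sum>i\<in>UNIV. (column j V \<bullet> column i U)\<^sup>2 * a$i) = column j V \<bullet> (orth_diag U a *v column j V)"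
    by (simp add: inner_orth_diag power2_eq_square inner_commute mult.commute mult.left_commute)
  also have "\<dots> \<le> b$j"
    using le[of "column j V"] by (simp add: column_inner_orth_diag[OF V] orthogonal_matrix_column_inner[OF V])
  finally show "(\<Sum>i\<in>UNIV. (column j V \<bullet> column i U)\<^sup>2 * a$i) \<le> b$j" .
qed

lemma loewner_le_sum_concave_eigenvalues:
  fixes U V :: "real^'n^'n"
  assumes U: "orthogonal_matrix U" and V: "orthogonal_matrix V"
    and le: "\<And>x. x \<bullet> (orth_diag U a *v x) \<le> x \<bullet> (orth_diag V b *v x)"
    and g: "concave_on I g" "mono_on I g" and a: "\<And>i. a$i \<in> I" and b: "\<And>j. b$j \<in> I"
  shows "(\<Sum>i\<in>UNIV. g (a$i)) \<le> (\<Sum>j\<in>UNIV. g (b$j))"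
  by (rule sum_concave_le_doubly_stochastic[where P = "\<lambda>i j. (column j V \<bullet> column i U)\<^sup>2"])
     (use loewner_le_orth_diag_mixing[OF U V le] g a b in auto)

definition psd_matrix :: "real^'n^'n \<Rightarrow> bool" where
  "psd_matrix A \<longleftrightarrow> transpose A = A \<and> (\<forall>x. 0 \<le> x \<bullet> (A *v x))"

lemma psd_matrix_orth_diag:
  assumes "psd_matrix A"
  obtains U d where "orthogonal_matrix U" "A = orth_diag U d" "\<And>i. 0 \<le> d$i"
proof -
  obtain U d where U: "orthogonal_matrix U" and A: "A = orth_diag U d"
    using symmetric_matrix_orth_diag assms unfolding psd_matrix_def by blast
  have "0 \<le> d$j" for j
  proof -
    have "0 \<le> column j U \<bullet> (A *v column j U)" using assms unfolding psd_matrix_def by blast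
    then show ?thesis unfolding A
      by (simp add: column_inner_orth_diag[OF U] orthogonal_matrix_column_inner[OF U])
  qed
  with U A show thesis by (rule that)
qed

lemma Phi_plus_nonneg: "0 \<le> Phi_plus p M"
  by (simp add: Phi_plus_def)

lemma Phi_plus_orth_diag:
  fixes U :: "real^'n^'n"
  assumes "orthogonal_matrix U"
  shows "Phi_plus p (orth_diag U a) =
     (if p = 0 then (\<Prod>j\<in>UNIV. a$j) powr (1 / real CARD('n))
      else if p > 0 \<and> (\<exists>j. a$j = 0) then 0
      else ((1 / real CARD('n)) * (\<Sum>j\<in>UNIV. a$j powr (- p))) powr (- 1 / p))"
  by (auto simp: Phi_plus_def mpow_orth_diag[OF assms] trace_orth_diag[OF assms]
      det_orth_diag[OF assms] invertible_orth_diag_iff[OF assms])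

context
  fixes U V :: "real^'n^'n" and a b :: "real^'n"
  assumes U: "orthogonal_matrix U" and V: "orthogonal_matrix V"
    and le: "\<And>x. x \<bullet> (orth_diag U a *v x) \<le> x \<bullet> (orth_diag V b *v x)"
    and a: "\<And>i. 0 \<le> a$i"
begin

lemma loewner_le_eigenvalues_nonneg: "0 \<le> b$j"
  using loewner_le_orth_diag_mixing(3)[OF U V le, of j] a
  by (smt (verit) mult_nonneg_nonneg sum_nonneg zero_le_power2)

lemma loewner_le_eigenvalues_pos:
  assumes "\<And>i. 0 < a$i"
  shows "0 < b$j"
proof -
  have "0 < column j V \<bullet> (orth_diag U a *v column j V)"
    by (rule orth_diag_quadratic_pos[OF U assms orthogonal_matrix_column_nonzero[OF V]])
  also have "\<dots> \<le> b$j"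
    using le[of "column j V"] by (simp add: column_inner_orth_diag[OF V] orthogonal_matrix_column_inner[OF V])
  finally show ?thesis .
qed

lemma Phi_plus_orth_diag_mono_zero: "Phi_plus 0 (orth_diag U a) \<le> Phi_plus 0 (orth_diag V b)"
proof (cases "\<forall>i. 0 < a$i")
  case True
  have b: "0 < b$j" for j by (rule loewner_le_eigenvalues_pos[OF True[rule_format]])
  have "(\<Sum>i\<in>UNIV. ln (a$i)) \<le> (\<Sum>j\<in>UNIV. ln (b$j))"
    by (rule loewner_le_sum_concave_eigenvalues[OF U V le ln_concave]) (auto simp: mono_on_def True b)
  then have "(\<Prod>i\<in>UNIV. a$i) \<le> (\<Prod>j\<in>UNIV. b$j)"
    using True b by (simp add: ln_prod prod_pos less_imp_neq[symmetric] flip: ln_le_cancel_iff)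
  then show ?thesis by (simp add: Phi_plus_orth_diag U V powr_mono2 prod_nonneg a)
next
  case False
  then have "(\<Prod>i\<in>UNIV. a$i) = 0" using a by (metis less_eq_real_def prod_zero_iff finite_class.finite_UNIV UNIV_I)
  then have "Phi_plus 0 (orth_diag U a) = 0" unfolding Phi_plus_orth_diag[OF U] by simp
  then show ?thesis using Phi_plus_nonneg by simp
qed

lemma Phi_plus_orth_diag_mono_pos:
  assumes p: "0 < p"
  shows "Phi_plus p (orth_diag U a) \<le> Phi_plus p (orth_diag V b)"
proof (cases "\<forall>i. 0 < a$i")
  case True
  have b: "0 < b$j" for j by (rule loewner_le_eigenvalues_pos[OF True[rule_format]])
  have "(\<Sum>i\<in>UNIV. - (a$i powr (- p))) \<le> (\<Sum>j\<in>UNIV. - (b$j powr (- p)))"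
    using convex_on_powr_neg[OF p]
    by (intro loewner_le_sum_concave_eigenvalues[OF U V le])
       (auto simp: mono_on_def concave_on_def True p less_imp_le b intro!: powr_mono2')
  then have "(\<Sum>j\<in>UNIV. b$j powr (- p)) \<le> (\<Sum>i\<in>UNIV. a$i powr (- p))" by (simp add: sum_negf)
  moreover have "0 < (\<Sum>j\<in>UNIV. b$j powr (- p))"
    using b by (intro sum_pos) (auto simp: less_imp_neq[symmetric])
  ultimately show ?thesis using True b p
    by (auto simp: Phi_plus_orth_diag U V less_imp_neq[symmetric] intro!: powr_mono2' divide_right_mono)
next
  case False
  then show ?thesis using p a Phi_plus_nonneg by (auto simp: Phi_plus_orth_diag U less_le)
qed

lemma Phi_plus_orth_diag_mono_neg:
  assumes p: "-1 \<le> p" "p < 0"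
  shows "Phi_plus p (orth_diag U a) \<le> Phi_plus p (orth_diag V b)"
proof -
  have "(\<Sum>i\<in>UNIV. a$i powr (- p)) \<le> (\<Sum>j\<in>UNIV. b$j powr (- p))"
    using p a loewner_le_eigenvalues_nonneg
    by (intro loewner_le_sum_concave_eigenvalues[OF U V le concave_on_powr])
       (auto simp: mono_on_def intro: powr_mono2)
  then show ?thesis using p
    by (auto simp: Phi_plus_orth_diag U V intro!: powr_mono2 divide_right_mono divide_nonneg_pos sum_nonneg)
qed

end

lemma Phi_plus_mono:
  assumes A: "psd_matrix A" and B: "transpose B = B"
    and le: "\<And>x. x \<bullet> (A *v x) \<le> x \<bullet> (B *v x)" and p: "-1 \<le> p"
  shows "Phi_plus p A \<le> Phi_plus p B"
proof -
  obtain U a where U: "orthogonal_matrix U" and A_eq: "A = orth_diag U a" and a: "\<And>i. 0 \<le> a$i"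
    using psd_matrix_orth_diag[OF A] by blast
  obtain V b where V: "orthogonal_matrix V" and B_eq: "B = orth_diag V b"
    using symmetric_matrix_orth_diag[OF B] .
  note le' = le[unfolded A_eq B_eq]
  consider "p = 0" | "0 < p" | "p < 0" by linarith
  then show ?thesis unfolding A_eq B_eq
    by cases (use Phi_plus_orth_diag_mono_zero[OF U V le' a] Phi_plus_orth_diag_mono_pos[OF U V le' a]
        Phi_plus_orth_diag_mono_neg[OF U V le' a p] in auto)
qed

lemma Phi_plus_scaleR:
  fixes A :: "real^'n^'n"
  assumes A: "psd_matrix A" and c: "0 < c"
  shows "Phi_plus p (c *\<^sub>R A) = c * Phi_plus p A"
proof -
  obtain U a where U: "orthogonal_matrix U" and A_eq: "A = orth_diag U a" and a: "\<And>i. 0 \<le> a$i"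
    using psd_matrix_orth_diag[OF A] by blast
  have cA: "c *\<^sub>R A = orth_diag U (c *\<^sub>R a)" by (simp add: A_eq scaleR_orth_diag)
  show ?thesis
  proof (cases "p = 0")
    case True
    have "(\<Prod>j\<in>UNIV. (c *\<^sub>R a)$j) = c ^ CARD('n) * (\<Prod>j\<in>UNIV. a$j)"
      by (simp add: prod.distrib)
    moreover have "(c ^ CARD('n)) powr (1 / real CARD('n)) = c"
      using c by (simp add: powr_realpow[symmetric] powr_powr)
    ultimately show ?thesis unfolding cA unfolding A_eq Phi_plus_orth_diag[OF U] using True c a
      by (simp add: powr_mult prod_nonneg)
  next
    case False
    have "(\<Sum>j\<in>UNIV. (c *\<^sub>R a)$j powr (- p)) = c powr (- p) * (\<Sum>j\<in>UNIV. a$j powr (- p))"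
      using c a by (simp add: powr_mult sum_distrib_left)
    moreover have "(c powr (- p) * y / n) powr (- 1 / p) = c * (y / n) powr (- 1 / p)"
      if "0 \<le> y" "0 < n" for y n :: real
    proof -
      have "(c powr (- p) * y / n) powr (- 1 / p) = (c powr (- p)) powr (- 1 / p) * (y / n) powr (- 1 / p)"
        using c that by (simp add: powr_mult[symmetric])
      then show ?thesis using False c by (simp add: powr_powr)
    qed
    ultimately show ?thesis unfolding cA unfolding A_eq Phi_plus_orth_diag[OF U] using False c a
      by (auto simp: sum_nonneg)
  qed
qed

lemma Phi_plus_pos:
  assumes "psd_matrix A" "invertible A"
  shows "0 < Phi_plus p A"
proof -
  obtain U a where U: "orthogonal_matrix U" and A: "A = orth_diag U a" and a: "\<And>i. 0 \<le> a$i"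
    using psd_matrix_orth_diag[OF assms(1)] by blast
  have a_pos: "0 < a$i" for i
    using a[of i] assms(2) unfolding A invertible_orth_diag_iff[OF U] by (metis less_eq_real_def)
  then have "0 < (\<Sum>j\<in>UNIV. a$j powr (- p))"
    by (intro sum_pos) (auto simp: less_imp_neq[symmetric])
  then show ?thesis using a_pos unfolding A Phi_plus_orth_diag[OF U]
    by (auto simp: prod_pos less_imp_neq[symmetric])
qed

section \<open>Designs and their information matrices\<close>

lemma is_designD:
  fixes \<nu> :: "(real^'n) measure"
  assumes "is_design X \<nu>" "compact X"
  shows "prob_space \<nu>" "sets \<nu> = sets borel" "X \<in> sets \<nu>" "AE x in \<nu>. x \<in> X"
proof -
  show P: "prob_space \<nu>" and S: "sets \<nu> = sets borel" using assms(1) unfolding is_design_def by auto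
  show X: "X \<in> sets \<nu>" using S compact_imp_closed[OF assms(2)] by simp
  have "measure \<nu> X = 1" using assms(1) unfolding is_design_def by (simp add: measure_def)
  then show "AE x in \<nu>. x \<in> X" using prob_space.AE_in_set_eq_1[OF P X] by simp
qed

lemma is_design_integrable:
  fixes \<nu> :: "(real^'n) measure" and f :: "real^'n \<Rightarrow> real"
  assumes \<nu>: "is_design X \<nu>" and X: "compact X" and f: "continuous_on UNIV f"
  shows "integrable \<nu> f"
proof -
  interpret prob_space \<nu> by (rule is_designD(1)[OF \<nu> X])
  obtain B where B: "\<And>y. y \<in> f ` X \<Longrightarrow> norm y \<le> B"
    using compact_imp_bounded[OF compact_continuous_image[OF continuous_on_subset[OF f] X]]
    by (auto simp: bounded_iff)
  show ?thesis
  proof (rule integrable_const_bound[where B = B])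
    show "AE x in \<nu>. norm (f x) \<le> B" using is_designD(4)[OF \<nu> X] by eventually_elim (use B in auto)
    show "f \<in> borel_measurable \<nu>"
      using borel_measurable_continuous_onI[OF f] measurable_cong_sets[OF is_designD(2)[OF \<nu> X] refl]
      by blast
  qed
qed

lemma inner_info_mat:
  fixes \<nu> :: "(real^'n) measure"
  assumes "is_design X \<nu>" "compact X"
  shows "u \<bullet> (info_mat \<nu> *v u) = (\<integral>x. (u \<bullet> x)\<^sup>2 \<partial>\<nu>)"
proof -
  have int: "integrable \<nu> (\<lambda>x. u$i * u$j * (x$i * x$j))" for i j
    by (rule is_design_integrable[OF assms]) (intro continuous_intros)
  have "u \<bullet> (info_mat \<nu> *v u) = (\<Sum>i\<in>UNIV. \<Sum>j\<in>UNIV. u$i * u$j * (\<integral>x. x$i * x$j \<partial>\<nu>))"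
    by (simp add: inner_vec_def matrix_vector_mult_def info_mat_def sum_distrib_left ac_simps)
  also have "\<dots> = (\<integral>x. (\<Sum>i\<in>UNIV. \<Sum>j\<in>UNIV. u$i * u$j * (x$i * x$j)) \<partial>\<nu>)"
    using int by (simp add: integral_sum integrable_sum)
  also have "\<dots> = (\<integral>x. (u \<bullet> x)\<^sup>2 \<partial>\<nu>)"
    by (simp add: inner_vec_def power2_eq_square sum_product mult.commute mult.left_commute)
  finally show ?thesis .
qed

lemma psd_info_mat:
  fixes \<nu> :: "(real^'n) measure"
  assumes "is_design X \<nu>" "compact X"
  shows "psd_matrix (info_mat \<nu>)"
  unfolding psd_matrix_def inner_info_mat[OF assms]
  by (simp add: vec_eq_iff info_mat_def transpose_def mult.commute)

lemma info_mat_quadratic_le: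
  fixes \<nu> :: "(real^'n) measure"
  assumes \<nu>: "is_design X \<nu>" and X: "compact X" and B: "\<And>x. x \<in> X \<Longrightarrow> norm x \<le> B"
  shows "u \<bullet> (info_mat \<nu> *v u) \<le> B\<^sup>2 * (u \<bullet> u)"
proof -
  interpret prob_space \<nu> by (rule is_designD(1)[OF \<nu> X])
  have "(\<integral>x. (u \<bullet> x)\<^sup>2 \<partial>\<nu>) \<le> (\<integral>x. B\<^sup>2 * (u \<bullet> u) \<partial>\<nu>)"
  proof (rule integral_mono_AE)
    show "integrable \<nu> (\<lambda>x. (u \<bullet> x)\<^sup>2)" by (rule is_design_integrable[OF \<nu> X]) (intro continuous_intros)
    show "AE x in \<nu>. (u \<bullet> x)\<^sup>2 \<le> B\<^sup>2 * (u \<bullet> u)"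
      using is_designD(4)[OF \<nu> X]
    proof eventually_elim
      fix x assume "x \<in> X"
      have "(u \<bullet> x)\<^sup>2 \<le> (u \<bullet> u) * (x \<bullet> x)" by (rule Cauchy_Schwarz_ineq)
      also have "\<dots> \<le> (u \<bullet> u) * B\<^sup>2"
        using B[OF \<open>x \<in> X\<close>] by (intro mult_left_mono) (auto simp: dot_square_norm power_mono)
      finally show "(u \<bullet> x)\<^sup>2 \<le> B\<^sup>2 * (u \<bullet> u)" by (simp add: mult.commute)
    qed
  qed simp
  then show ?thesis by (simp add: inner_info_mat[OF \<nu> X] prob_space)
qed

text \<open>The design \<open>\<xi>|\<^bsub>-S\<^esub> + \<xi>(S) \<zeta>\<close>, written as the image of \<open>\<xi> \<otimes> \<zeta>\<close> under the map that
  keeps \<open>x\<close> outside \<open>S\<close> and replaces it by the independent draw \<open>y\<close> inside \<open>S\<close>.\<close>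
definition replace_on :: "(real^'n) measure \<Rightarrow> (real^'n) measure \<Rightarrow> (real^'n) set \<Rightarrow> (real^'n) measure" where
  "replace_on \<xi> \<zeta> S = distr (\<xi> \<Otimes>\<^sub>M \<zeta>) borel (\<lambda>(x, y). if x \<in> S then y else x)"

context
  fixes X S :: "(real^'n) set" and \<xi> \<zeta> :: "(real^'n) measure"
  assumes \<xi>: "is_design X \<xi>" and \<zeta>: "is_design X \<zeta>" and X: "compact X" and S: "open S"
begin

lemma measurable_replace_on: "(\<lambda>(x, y). if x \<in> S then y else x) \<in> measurable (\<xi> \<Otimes>\<^sub>M \<zeta>) borel"
proof -
  have "(\<lambda>z. if z \<in> S \<times> UNIV then snd z else fst z) \<in> measurable (borel \<Otimes>\<^sub>M borel) (borel :: (real^'n) measure)"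
    by (rule measurable_If_set) (auto simp: S)
  moreover have "measurable (\<xi> \<Otimes>\<^sub>M \<zeta>) borel = measurable (borel \<Otimes>\<^sub>M borel) (borel :: (real^'n) measure)"
    by (rule measurable_cong_sets)
       (simp_all add: sets_pair_measure_cong[OF is_designD(2)[OF \<xi> X] is_designD(2)[OF \<zeta> X]])
  ultimately show ?thesis by (simp add: case_prod_beta' mem_Times_iff)
qed

lemma is_design_replace_on: "is_design X (replace_on \<xi> \<zeta> S)"
proof -
  interpret A: prob_space \<xi> by (rule is_designD(1)[OF \<xi> X])
  interpret B: prob_space \<zeta> by (rule is_designD(1)[OF \<zeta> X])
  interpret P: pair_prob_space \<xi> \<zeta> by unfold_locales
  have P: "prob_space (replace_on \<xi> \<zeta> S)"
    unfolding replace_on_def by (rule P.prob_space_distr[OF measurable_replace_on])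
  have Xb: "X \<in> sets borel" using is_designD(2,3)[OF \<xi> X] by simp
  have "AE z in \<xi> \<Otimes>\<^sub>M \<zeta>. (case z of (x, y) \<Rightarrow> if x \<in> S then y else x) \<in> X"
  proof (rule P.AE_pair_measure)
    show "{z \<in> space (\<xi> \<Otimes>\<^sub>M \<zeta>). (case z of (x, y) \<Rightarrow> if x \<in> S then y else x) \<in> X} \<in> sets (\<xi> \<Otimes>\<^sub>M \<zeta>)"
      using measurable_sets[OF measurable_replace_on Xb] by (simp add: vimage_def Int_def conj_commute)
    show "AE x in \<xi>. AE y in \<zeta>. (case (x, y) of (x, y) \<Rightarrow> if x \<in> S then y else x) \<in> X"
      using is_designD(4)[OF \<xi> X] by eventually_elim (use is_designD(4)[OF \<zeta> X] in auto)
  qed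
  then have "AE z in replace_on \<xi> \<zeta> S. z \<in> X"
    unfolding replace_on_def by (subst AE_distr_iff[OF measurable_replace_on]) (use Xb in auto)
  then have "measure (replace_on \<xi> \<zeta> S) X = 1"
    using prob_space.AE_in_set_eq_1[OF P] Xb by (simp add: replace_on_def)
  then show ?thesis
    unfolding is_design_def using P finite_measure.emeasure_eq_measure[OF prob_space.finite_measure[OF P]]
    by (simp add: replace_on_def)
qed

lemma nn_integral_replace_on:
  assumes g: "g \<in> borel_measurable (borel :: (real^'n) measure)"
  shows "(\<integral>\<^sup>+ z. g z \<partial>replace_on \<xi> \<zeta> S) = (\<integral>\<^sup>+ x. g x * indicator (- S) x \<partial>\<xi>) + emeasure \<xi> S * (\<integral>\<^sup>+ y. g y \<partial>\<zeta>)"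
proof -
  interpret B: prob_space \<zeta> by (rule is_designD(1)[OF \<zeta> X])
  have g\<xi>: "g \<in> borel_measurable \<xi>" using g measurable_cong_sets[OF is_designD(2)[OF \<xi> X] refl] by blast
  have S\<xi>: "S \<in> sets \<xi>" using is_designD(2)[OF \<xi> X] S by simp
  have "(\<integral>\<^sup>+ z. g z \<partial>replace_on \<xi> \<zeta> S) = (\<integral>\<^sup>+ z. g (case z of (x, y) \<Rightarrow> if x \<in> S then y else x) \<partial>(\<xi> \<Otimes>\<^sub>M \<zeta>))"
    unfolding replace_on_def by (rule nn_integral_distr[OF measurable_replace_on]) (use g in simp)
  also have "\<dots> = (\<integral>\<^sup>+ x. \<integral>\<^sup>+ y. g (if x \<in> S then y else x) \<partial>\<zeta> \<partial>\<xi>)"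
    by (subst B.nn_integral_fst[symmetric]) (auto intro: measurable_compose[OF measurable_replace_on g])
  also have "\<dots> = (\<integral>\<^sup>+ x. (\<integral>\<^sup>+ y. g y \<partial>\<zeta>) * indicator S x + g x * indicator (- S) x \<partial>\<xi>)"
    by (intro nn_integral_cong) (simp add: B.emeasure_space_1 split: split_indicator)
  also have "\<dots> = (\<integral>\<^sup>+ x. (\<integral>\<^sup>+ y. g y \<partial>\<zeta>) * indicator S x \<partial>\<xi>) + (\<integral>\<^sup>+ x. g x * indicator (- S) x \<partial>\<xi>)"
    by (rule nn_integral_add) (use g\<xi> S\<xi> in auto)
  also have "(\<integral>\<^sup>+ x. (\<integral>\<^sup>+ y. g y \<partial>\<zeta>) * indicator S x \<partial>\<xi>) = (\<integral>\<^sup>+ y. g y \<partial>\<zeta>) * emeasure \<xi> S"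
    by (rule nn_integral_cmult_indicator[OF S\<xi>])
  finally show ?thesis by (simp add: ac_simps)
qed

lemma integral_replace_on:
  fixes h :: "real^'n \<Rightarrow> real"
  assumes h: "continuous_on UNIV h" and h_nonneg: "\<And>x. 0 \<le> h x"
  shows "(\<integral>z. h z \<partial>replace_on \<xi> \<zeta> S) = (\<integral>x. indicator (- S) x * h x \<partial>\<xi>) + measure \<xi> S * (\<integral>y. h y \<partial>\<zeta>)"
proof -
  interpret A: prob_space \<xi> by (rule is_designD(1)[OF \<xi> X])
  have int\<xi>: "integrable \<xi> (\<lambda>x. indicator (- S) x * h x)"
    using integrable_mult_indicator[OF _ is_design_integrable[OF \<xi> X h], of "- S"]
      is_designD(2)[OF \<xi> X] S by simp
  have int\<zeta>: "integrable \<zeta> h" by (rule is_design_integrable[OF \<zeta> X h])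
  have intR: "integrable (replace_on \<xi> \<zeta> S) h" by (rule is_design_integrable[OF is_design_replace_on X h])
  have meas: "(\<lambda>z. ennreal (h z)) \<in> borel_measurable borel"
    using borel_measurable_continuous_onI[OF h] by measurable
  have "ennreal (\<integral>z. h z \<partial>replace_on \<xi> \<zeta> S) = (\<integral>\<^sup>+ z. ennreal (h z) \<partial>replace_on \<xi> \<zeta> S)"
    by (rule nn_integral_eq_integral[symmetric]) (use intR h_nonneg in auto)
  also have "\<dots> = (\<integral>\<^sup>+ x. ennreal (h x) * indicator (- S) x \<partial>\<xi>) + emeasure \<xi> S * (\<integral>\<^sup>+ y. ennreal (h y) \<partial>\<zeta>)"
    by (rule nn_integral_replace_on[OF meas])
  also have "(\<integral>\<^sup>+ x. ennreal (h x) * indicator (- S) x \<partial>\<xi>) = (\<integral>\<^sup>+ x. ennreal (indicator (- S) x * h x) \<partial>\<xi>)"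
    by (intro nn_integral_cong) (simp split: split_indicator)
  also have "\<dots> = ennreal (\<integral>x. indicator (- S) x * h x \<partial>\<xi>)"
    by (rule nn_integral_eq_integral) (use int\<xi> h_nonneg in auto)
  also have "(\<integral>\<^sup>+ y. ennreal (h y) \<partial>\<zeta>) = ennreal (\<integral>y. h y \<partial>\<zeta>)"
    by (rule nn_integral_eq_integral) (use int\<zeta> h_nonneg in auto)
  also have "emeasure \<xi> S = ennreal (measure \<xi> S)" by (rule A.emeasure_eq_measure)
  finally have *: "ennreal (\<integral>z. h z \<partial>replace_on \<xi> \<zeta> S)
      = ennreal (\<integral>x. indicator (- S) x * h x \<partial>\<xi>) + ennreal (measure \<xi> S) * ennreal (\<integral>y. h y \<partial>\<zeta>)" .
  have "0 \<le> (\<integral>x. indicator (- S) x * h x \<partial>\<xi>)" "0 \<le> (\<integral>y. h y \<partial>\<zeta>)" "0 \<le> (\<integral>z. h z \<partial>replace_on \<xi> \<zeta> S)"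
    by (simp_all add: integral_nonneg_AE h_nonneg)
  with * show ?thesis by (simp add: ennreal_mult[symmetric] ennreal_plus[symmetric] del: ennreal_plus)
qed

end

section \<open>Support points of optimal designs\<close>

lemma inner_info_mat_replace_on_ge:
  fixes \<xi> \<zeta> :: "(real^'n) measure"
  assumes \<xi>: "is_design X \<xi>" and \<zeta>: "is_design X \<zeta>" and X: "compact X" and S: "open S"
    and bound: "\<And>x. x \<in> S \<Longrightarrow> (u \<bullet> x)\<^sup>2 \<le> r * (u \<bullet> (info_mat \<zeta> *v u))"
  shows "u \<bullet> (info_mat \<xi> *v u) + (1 - r) * measure \<xi> S * (u \<bullet> (info_mat \<zeta> *v u))
    \<le> u \<bullet> (info_mat (replace_on \<xi> \<zeta> S) *v u)"
proof -
  define h where "h x = (u \<bullet> x)\<^sup>2" for x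
  define Q where "Q = u \<bullet> (info_mat \<zeta> *v u)"
  interpret prob_space \<xi> by (rule is_designD(1)[OF \<xi> X])
  have h: "continuous_on UNIV h" unfolding h_def by (intro continuous_intros)
  have S\<xi>: "S \<in> sets \<xi>" using is_designD(2)[OF \<xi> X] S by simp
  have int: "integrable \<xi> (\<lambda>x. indicator A x * h x)" if "A \<in> sets \<xi>" for A
    using integrable_mult_indicator[OF that is_design_integrable[OF \<xi> X h]] by simp
  have "integrable \<xi> (\<lambda>x. indicator S x * (r * Q))"
    using integrable_mult_indicator[OF S\<xi>, of "\<lambda>_. r * Q"] by simp
  then have "(\<integral>x. indicator S x * h x \<partial>\<xi>) \<le> (\<integral>x. indicator S x * (r * Q) \<partial>\<xi>)"
    by (intro integral_mono int S\<xi>)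
       (auto simp: S\<xi> bound[unfolded Q_def[symmetric]] h_def split: split_indicator)
  also have "\<dots> = r * Q * measure \<xi> S" using S\<xi> by (simp add: mult.commute)
  finally have on_S: "(\<integral>x. indicator S x * h x \<partial>\<xi>) \<le> r * Q * measure \<xi> S" .
  have "(\<integral>x. h x \<partial>\<xi>) = (\<integral>x. indicator (- S) x * h x + indicator S x * h x \<partial>\<xi>)"
    by (intro Bochner_Integration.integral_cong) (auto split: split_indicator)
  also have "\<dots> = (\<integral>x. indicator (- S) x * h x \<partial>\<xi>) + (\<integral>x. indicator S x * h x \<partial>\<xi>)"
    using S\<xi> is_designD(2)[OF \<xi> X] by (intro Bochner_Integration.integral_add int) auto
  finally have "u \<bullet> (info_mat \<xi> *v u) = (\<integral>x. indicator (- S) x * h x \<partial>\<xi>) + (\<integral>x. indicator S x * h x \<partial>\<xi>)"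
    unfolding h_def inner_info_mat[OF \<xi> X] .
  moreover have "u \<bullet> (info_mat (replace_on \<xi> \<zeta> S) *v u) = (\<integral>x. indicator (- S) x * h x \<partial>\<xi>) + measure \<xi> S * Q"
    unfolding inner_info_mat[OF is_design_replace_on[OF \<xi> \<zeta> X S] X] Q_def inner_info_mat[OF \<zeta> X]
    using integral_replace_on[OF \<xi> \<zeta> X S h] by (simp add: h_def)
  ultimately show ?thesis using on_S unfolding Q_def by (simp add: algebra_simps)
qed

lemma Phi_plus_less_of_scaled_loewner:
  assumes A: "psd_matrix A" and B: "transpose B = B" and p: "-1 \<le> p"
    and \<delta>: "0 < \<delta>" and pos: "0 < Phi_plus p A"
    and le: "\<And>u. (1 + \<delta>) * (u \<bullet> (A *v u)) \<le> u \<bullet> (B *v u)"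
  shows "Phi_plus p A < Phi_plus p B"
proof -
  have "psd_matrix ((1 + \<delta>) *\<^sub>R A)"
    using A \<delta> unfolding psd_matrix_def by (simp add: transpose_scalar flip: scaleR_matrix_vector_assoc)
  have "Phi_plus p A < (1 + \<delta>) * Phi_plus p A" using \<delta> pos by simp
  also have "\<dots> = Phi_plus p ((1 + \<delta>) *\<^sub>R A)" using Phi_plus_scaleR[OF A] \<delta> by simp
  also have "\<dots> \<le> Phi_plus p B"
    using le by (intro Phi_plus_mono[OF \<open>psd_matrix ((1 + \<delta>) *\<^sub>R A)\<close> B _ p])
      (simp flip: scaleR_matrix_vector_assoc)
  finally show ?thesis .
qed

lemma replace_on_scaled_loewner_ge:
  fixes \<xi> \<zeta> :: "(real^'n) measure"
  assumes \<xi>: "is_design X \<xi>" and \<zeta>: "is_design X \<zeta>" and X: "compact X" and S: "open S"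
    and r: "r < 1" and w: "0 < measure \<xi> S"
    and \<kappa>: "0 < \<kappa>" "\<And>u. \<kappa> * (u \<bullet> u) \<le> u \<bullet> (info_mat \<zeta> *v u)"
    and bound: "\<And>x u. x \<in> S \<Longrightarrow> (u \<bullet> x)\<^sup>2 \<le> r * (u \<bullet> (info_mat \<zeta> *v u))"
  obtains \<delta> where "0 < \<delta>"
    "\<And>u. (1 + \<delta>) * (u \<bullet> (info_mat \<xi> *v u)) \<le> u \<bullet> (info_mat (replace_on \<xi> \<zeta> S) *v u)"
proof -
  obtain B where B: "\<And>x. x \<in> X \<Longrightarrow> norm x \<le> B" using compact_imp_bounded[OF X] bounded_iff by metis
  have B2: "0 < B\<^sup>2 + 1" by (auto intro: add_nonneg_pos)
  define \<delta> where "\<delta> = (1 - r) * measure \<xi> S * \<kappa> / (B\<^sup>2 + 1)"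
  have \<delta>: "0 < \<delta>" unfolding \<delta>_def using r w \<kappa> B2 by (intro divide_pos_pos mult_pos_pos) auto
  have "(1 + \<delta>) * (u \<bullet> (info_mat \<xi> *v u)) \<le> u \<bullet> (info_mat (replace_on \<xi> \<zeta> S) *v u)" for u
  proof -
    have "u \<bullet> (info_mat \<xi> *v u) \<le> (B\<^sup>2 + 1) * (u \<bullet> u)"
      using info_mat_quadratic_le[OF \<xi> X B, of u] by (simp add: algebra_simps add_increasing)
    then have "\<delta> * (u \<bullet> (info_mat \<xi> *v u)) \<le> \<delta> * ((B\<^sup>2 + 1) * (u \<bullet> u))"
      using \<delta> by (intro mult_left_mono) auto
    also have "\<dots> = (1 - r) * measure \<xi> S * (\<kappa> * (u \<bullet> u))"
      unfolding \<delta>_def using B2 by (simp add: field_simps)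
    also have "\<dots> \<le> (1 - r) * measure \<xi> S * (u \<bullet> (info_mat \<zeta> *v u))"
      using \<kappa>(2) r w by (intro mult_left_mono) auto
    also have "u \<bullet> (info_mat \<xi> *v u) + \<dots> \<le> u \<bullet> (info_mat (replace_on \<xi> \<zeta> S) *v u)"
      by (rule inner_info_mat_replace_on_ge[OF \<xi> \<zeta> X S bound])
    finally show ?thesis by (simp add: algebra_simps)
  qed
  with \<delta> show thesis by (rule that)
qed

lemma support_point_inverse_quadratic_ge_one:
  fixes \<xi> \<xi>opt :: "(real^'n) measure" and U :: "real^'n^'n"
  assumes X: "compact X" and p: "-1 < p" and \<xi>: "is_design X \<xi>"
    and U: "orthogonal_matrix U" and M: "info_mat \<xi> = orth_diag U d" and d: "\<And>j. 0 < d$j"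
    and opt: "phi_optimal p X \<xi>opt" and xs: "support_point \<xi>opt xs"
  shows "1 \<le> xs \<bullet> (orth_diag U (\<chi> j. inverse (d$j)) *v xs)"
proof (rule ccontr)
  define \<phi> where "\<phi> x = x \<bullet> (orth_diag U (\<chi> j. inverse (d$j)) *v x)" for x
  assume "\<not> 1 \<le> xs \<bullet> (orth_diag U (\<chi> j. inverse (d$j)) *v xs)"
  then obtain r where r: "r < 1" "\<phi> xs < r" unfolding \<phi>_def by (meson dense not_le)
  have "open {x. \<phi> x < r}" unfolding \<phi>_def
    by (intro open_Collect_less continuous_intros linear_continuous_on matrix_vector_mul_bounded_linear)
  then obtain e where "0 < e" and e: "ball xs e \<subseteq> {x. \<phi> x < r}"
    using r(2) open_contains_ball by blast
  have \<xi>opt: "is_design X \<xi>opt" using opt unfolding phi_optimal_def by simp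
  have "0 < emeasure \<xi>opt (ball xs e)" using xs \<open>0 < e\<close> unfolding support_point_def by simp
  then have w: "0 < measure \<xi>opt (ball xs e)"
    using finite_measure.emeasure_eq_measure[OF prob_space.finite_measure[OF is_designD(1)[OF \<xi>opt X]]]
    by simp
  have bound: "(u \<bullet> x)\<^sup>2 \<le> r * (u \<bullet> (info_mat \<xi> *v u))" if "x \<in> ball xs e" for x u
  proof -
    have "(u \<bullet> x)\<^sup>2 \<le> \<phi> x * (u \<bullet> (info_mat \<xi> *v u))"
      unfolding \<phi>_def M by (rule inner_square_le_orth_diag[OF U d])
    also have "\<dots> \<le> r * (u \<bullet> (info_mat \<xi> *v u))"
      using e that psd_info_mat[OF \<xi> X] unfolding psd_matrix_def by (intro mult_right_mono) auto
    finally show ?thesis .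
  qed
  define \<kappa> where "\<kappa> = Min (range (\<lambda>j. d$j))"
  have \<kappa>: "0 < \<kappa>" "\<And>j. \<kappa> \<le> d$j" unfolding \<kappa>_def using d by (auto intro: Min_le)
  have "\<kappa> * (u \<bullet> u) \<le> u \<bullet> (info_mat \<xi> *v u)" for u
    using orth_diag_quadratic_mono[of "\<kappa> *\<^sub>R (\<chi> j. 1)" d u U] \<kappa>(2)
    by (simp add: M orth_diag_one[OF U] flip: scaleR_orth_diag scaleR_matrix_vector_assoc)
  then obtain \<delta> where \<delta>: "0 < \<delta>" and quad:
      "\<And>u. (1 + \<delta>) * (u \<bullet> (info_mat \<xi>opt *v u)) \<le> u \<bullet> (info_mat (replace_on \<xi>opt \<xi> (ball xs e)) *v u)"
    using replace_on_scaled_loewner_ge[OF \<xi>opt \<xi> X open_ball r(1) w \<kappa>(1) _ bound] by blast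
  define \<xi>' where "\<xi>' = replace_on \<xi>opt \<xi> (ball xs e)"
  have \<xi>': "is_design X \<xi>'" unfolding \<xi>'_def by (rule is_design_replace_on[OF \<xi>opt \<xi> X open_ball])
  have "0 < Phi_plus p (info_mat \<xi>)"
    by (rule Phi_plus_pos[OF psd_info_mat[OF \<xi> X]])
       (simp add: M invertible_orth_diag_iff[OF U] d less_imp_neq[symmetric])
  also have "\<dots> \<le> Phi_plus p (info_mat \<xi>opt)" using opt \<xi> unfolding phi_optimal_def phi_def by blast
  finally have "Phi_plus p (info_mat \<xi>opt) < Phi_plus p (info_mat \<xi>')"
    using Phi_plus_less_of_scaled_loewner[OF psd_info_mat[OF \<xi>opt X] _ _ \<delta> _ quad[folded \<xi>'_def]] p
      psd_info_mat[OF \<xi>' X] unfolding psd_matrix_def by simp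
  moreover have "Phi_plus p (info_mat \<xi>') \<le> Phi_plus p (info_mat \<xi>opt)"
    using opt \<xi>' unfolding phi_optimal_def phi_def by blast
  ultimately show False by simp
qed

lemma lambda_min_mpow_mul_le:
  fixes U :: "real^'n^'n"
  assumes U: "orthogonal_matrix U"
  shows "lambda_min (mpow (orth_diag U d) s) * (x \<bullet> (mpow (orth_diag U d) t *v x))
    \<le> x \<bullet> (mpow (orth_diag U d) (s + t) *v x)"
proof -
  define m where "m = Min (range (\<lambda>j. d$j powr s))"
  have "m * d$j powr t \<le> d$j powr (s + t)" for j
    unfolding m_def powr_add by (intro mult_right_mono Min_le) auto
  then have "x \<bullet> (orth_diag U (m *\<^sub>R (\<chi> j. d$j powr t)) *v x) \<le> x \<bullet> (orth_diag U (\<chi> j. d$j powr (s + t)) *v x)"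
    by (intro orth_diag_quadratic_mono) simp
  then show ?thesis
    by (simp add: mpow_orth_diag[OF U] lambda_min_orth_diag[OF U] m_def
        flip: scaleR_orth_diag scaleR_matrix_vector_assoc)
qed

lemma lambda_min_mpow_nonneg:
  fixes U :: "real^'n^'n"
  assumes U: "orthogonal_matrix U"
  shows "0 \<le> lambda_min (mpow (orth_diag U d) s)"
  by (simp add: mpow_orth_diag[OF U] lambda_min_orth_diag[OF U])

theorem mainTheorem5:
  fixes X :: "(real^'m) set" and p :: real
    and \<xi> \<xi>opt :: "(real^'m) measure" and xs :: "real^'m"
  assumes "compact X"
    and "p > -1"
    and "is_design X \<xi>" and "invertible (info_mat \<xi>)"
    and "phi_optimal p X \<xi>opt"
    and "support_point \<xi>opt xs"
  shows "xs \<bullet> (mpow (info_mat \<xi>) (- (p + 1)) *v xs) \<ge> lambda_min (mpow (info_mat \<xi>) (- p))"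
proof -
  obtain U d where U: "orthogonal_matrix U" and M: "info_mat \<xi> = orth_diag U d" and "\<And>i. 0 \<le> d$i"
    using psd_matrix_orth_diag[OF psd_info_mat[OF assms(3,1)]] by blast
  with assms(4) have d: "\<And>i. 0 < d$i" by (auto simp: invertible_orth_diag_iff[OF U] less_le)
  have "(\<chi> j. d$j powr -1) = (\<chi> j. inverse (d$j))"
    using d by (simp add: powr_minus less_imp_le)
  then have "1 \<le> xs \<bullet> (mpow (info_mat \<xi>) (- 1) *v xs)"
    using support_point_inverse_quadratic_ge_one[OF assms(1,2,3) U M d assms(5,6)]
    by (simp add: M mpow_orth_diag[OF U])
  then have "lambda_min (mpow (info_mat \<xi>) (- p))
      \<le> lambda_min (mpow (info_mat \<xi>) (- p)) * (xs \<bullet> (mpow (info_mat \<xi>) (- 1) *v xs))"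
    using mult_left_mono[OF _ lambda_min_mpow_nonneg[OF U, of d "- p"]] unfolding M by fastforce
  also have "\<dots> \<le> xs \<bullet> (mpow (info_mat \<xi>) (- p + - 1) *v xs)"
    unfolding M by (rule lambda_min_mpow_mul_le[OF U])
  finally show ?thesis by (simp add: add.commute)
qed

end
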